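(* Let $G$ be a group, $H\subset G$ a subgroup and $A$ an $H$-ring. Then there is a ring isomorphism $\alpha:\operatorname{ind}_H^G(A)\rtimes G\xrightarrow{\cong}M_{G/H}(A\rtimes H)$, natural in $A$, such that $\alpha\circ(\xi_H(1,-)\rtimes\mathrm{id})$ equals the map $A\rtimes H\to M_{G/H}(A\rtimes H)$, $x\mapsto e_{H,H}\otimes x$, and such that $\alpha$ is compatible with the natural representations of both rings as endomorphisms of the right $A\rtimes H$-module $A^{(G)}$ (identified with $(A\rtimes H)^{(G/H)}$). Explicitly, choosing a set of representatives $\mathcal R$ of $G/H$ with $1\in\mathcal R$, writing $\hat s\in\mathcal R$ for the representative of $sH$ and $\phi(s)=\hat s^{-1}s\in H$, one may take $\alpha(\xi_H(s,a)\rtimes g)=e_{sH,g^{-1}sH}\otimes\phi(s)(a)\rtimes\phi(s)\phi(g^{-1}s)^{-1}$.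
   Context: Rings are not necessarily unital. For an $H$-ring $A$, $\operatorname{ind}_H^G(A)$ is the ring (pointwise operations) of functions $f:G\to A$ with $f(gh)=h^{-1}f(g)$ for $h\in H$ whose support meets only finitely many cosets $gH$, with $G$-action $(g'f)(g)=f(g'^{-1}g)$; for $s\in G,a\in A$, $\xi_H(s,a)=\sum_{h\in H}h^{-1}(a)\chi_{sh}$, $\chi_t$ the characteristic function of $\{t\}$. Crossed product: $B\rtimes G=B\otimes\mathbb Z[G]$ with $(b\rtimes g)(b'\rtimes g')=b\,g(b')\rtimes gg'$. $M_{G/H}(B)$ denotes $G/H\times G/H$ matrices over $B$ with finitely many nonzero entries, with matrix units $e_{x,y}$. $A^{(G)}$ is the set of finitely supported functions $G\to A$; it is a left $\operatorname{ind}_H^G(A)\rtimes G$-module (pointwise multiplication and left translation) and a right $A\rtimes H$-module via $[\phi\cdot(a\rtimes h)](g)=h^{-1}(\phi(gh^{-1})a)$. *)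

theory Defs
  imports "HOL-Algebra.Left_Coset" "HOL-Library.Function_Algebras"
begin

text \<open>All "functions on G" are total HOL functions which are 0 outside the relevant carrier.
  Addition of all rings below is pointwise addition of functions (Function_Algebras).\<close>

definition H_ring :: "('g,'m) monoid_scheme \<Rightarrow> 'g set \<Rightarrow> ('g \<Rightarrow> 'a::ring \<Rightarrow> 'a) \<Rightarrow> bool" where
  "H_ring G H act \<longleftrightarrow>
     (\<forall>h\<in>H. \<forall>a b. act h (a + b) = act h a + act h b \<and> act h (a * b) = act h a * act h b) \<and>
     (\<forall>a. act \<one>\<^bsub>G\<^esub> a = a) \<and>
     (\<forall>h\<in>H. \<forall>h'\<in>H. \<forall>a. act (h \<otimes>\<^bsub>G\<^esub> h') a = act h (act h' a))"

definition H_ring_hom :: "'g set \<Rightarrow> ('g \<Rightarrow> 'a::ring \<Rightarrow> 'a) \<Rightarrow> ('g \<Rightarrow> 'b::ring \<Rightarrow> 'b) \<Rightarrow> ('a \<Rightarrow> 'b) \<Rightarrow> bool" where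
  "H_ring_hom H act act' f \<longleftrightarrow>
     (\<forall>a b. f (a + b) = f a + f b \<and> f (a * b) = f a * f b) \<and>
     (\<forall>h\<in>H. \<forall>a. f (act h a) = act' h (f a))"

text \<open>ind_H^G(A): functions f : G \<rightarrow> A with f(gh) = h^{-1} f(g), support meeting finitely many cosets gH.
  Its multiplication is pointwise (the times-instance on functions).\<close>
definition ind :: "('g,'m) monoid_scheme \<Rightarrow> 'g set \<Rightarrow> ('g \<Rightarrow> 'a::ring \<Rightarrow> 'a) \<Rightarrow> ('g \<Rightarrow> 'a) set" where
  "ind G H act = {f. (\<forall>g. g \<notin> carrier G \<longrightarrow> f g = 0) \<and>
      (\<forall>g\<in>carrier G. \<forall>h\<in>H. f (g \<otimes>\<^bsub>G\<^esub> h) = act (inv\<^bsub>G\<^esub> h) (f g)) \<and>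
      finite {g <#\<^bsub>G\<^esub> H | g. g \<in> carrier G \<and> f g \<noteq> 0}}"

definition ind_act :: "('g,'m) monoid_scheme \<Rightarrow> 'g \<Rightarrow> ('g \<Rightarrow> 'a::zero) \<Rightarrow> ('g \<Rightarrow> 'a)" where
  "ind_act G g' f = (\<lambda>g. if g \<in> carrier G then f (inv\<^bsub>G\<^esub> g' \<otimes>\<^bsub>G\<^esub> g) else 0)"

text \<open>xi_H(s,a) = sum_{h in H} h^{-1}(a) chi_{sh}.\<close>
definition xi :: "('g,'m) monoid_scheme \<Rightarrow> 'g set \<Rightarrow> ('g \<Rightarrow> 'a::ring \<Rightarrow> 'a) \<Rightarrow> 'g \<Rightarrow> 'a \<Rightarrow> ('g \<Rightarrow> 'a)" where
  "xi G H act s a = (\<lambda>g. if g \<in> s <#\<^bsub>G\<^esub> H then act (inv\<^bsub>G\<^esub> (inv\<^bsub>G\<^esub> s \<otimes>\<^bsub>G\<^esub> g)) a else 0)"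

text \<open>Crossed product B \<rtimes> K (K a subgroup of G acting on B), elements sum_k b_k \<rtimes> k
  represented as finitely supported functions K \<rightarrow> B.\<close>
definition cp_carrier :: "'b::zero set \<Rightarrow> 'g set \<Rightarrow> ('g \<Rightarrow> 'b) set" where
  "cp_carrier CB K = {F. (\<forall>k\<in>K. F k \<in> CB) \<and> (\<forall>k. k \<notin> K \<longrightarrow> F k = 0) \<and> finite {k. F k \<noteq> 0}}"

definition cp_single :: "'b::zero \<Rightarrow> 'g \<Rightarrow> ('g \<Rightarrow> 'b)" where
  "cp_single b g = (\<lambda>k. if k = g then b else 0)"

text \<open>(b \<rtimes> g)(b' \<rtimes> g') = b g(b') \<rtimes> gg', extended bilinearly.\<close>
definition cp_mult :: "('b \<Rightarrow> 'b \<Rightarrow> 'b) \<Rightarrow> ('g \<Rightarrow> 'b \<Rightarrow> 'b) \<Rightarrow> ('g,'m) monoid_scheme \<Rightarrow> 'g set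
      \<Rightarrow> ('g \<Rightarrow> 'b::comm_monoid_add) \<Rightarrow> ('g \<Rightarrow> 'b) \<Rightarrow> ('g \<Rightarrow> 'b)" where
  "cp_mult mul act G K F F' = (\<lambda>k. if k \<in> K then
      (\<Sum>g\<in>{g\<in>K. F g \<noteq> 0}. mul (F g) (act g (F' (inv\<^bsub>G\<^esub> g \<otimes>\<^bsub>G\<^esub> k)))) else 0)"

abbreviation AH_carrier :: "'g set \<Rightarrow> ('g \<Rightarrow> 'a::ring) set" where
  "AH_carrier H \<equiv> cp_carrier (UNIV :: 'a set) H"

abbreviation AH_mult :: "('g,'m) monoid_scheme \<Rightarrow> 'g set \<Rightarrow> ('g \<Rightarrow> 'a::ring \<Rightarrow> 'a)
    \<Rightarrow> ('g \<Rightarrow> 'a) \<Rightarrow> ('g \<Rightarrow> 'a) \<Rightarrow> ('g \<Rightarrow> 'a)" where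
  "AH_mult G H act \<equiv> cp_mult (*) act G H"

abbreviation indG_carrier :: "('g,'m) monoid_scheme \<Rightarrow> 'g set \<Rightarrow> ('g \<Rightarrow> 'a::ring \<Rightarrow> 'a)
    \<Rightarrow> ('g \<Rightarrow> 'g \<Rightarrow> 'a) set" where
  "indG_carrier G H act \<equiv> cp_carrier (ind G H act) (carrier G)"

abbreviation indG_mult :: "('g,'m) monoid_scheme \<Rightarrow> ('g \<Rightarrow> 'g \<Rightarrow> 'a::ring)
    \<Rightarrow> ('g \<Rightarrow> 'g \<Rightarrow> 'a) \<Rightarrow> ('g \<Rightarrow> 'g \<Rightarrow> 'a)" where
  "indG_mult G \<equiv> cp_mult (*) (ind_act G) G (carrier G)"

definition mat_carrier :: "('g,'m) monoid_scheme \<Rightarrow> 'g set \<Rightarrow> 'b::zero set \<Rightarrow> ('g set \<times> 'g set \<Rightarrow> 'b) set" where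
  "mat_carrier G H CB = {M. (\<forall>x y. M (x, y) \<in> CB) \<and>
      (\<forall>x y. (x \<notin> lcosets\<^bsub>G\<^esub> H \<or> y \<notin> lcosets\<^bsub>G\<^esub> H) \<longrightarrow> M (x, y) = 0) \<and>
      finite {p. M p \<noteq> 0}}"

definition mat_mult :: "('b \<Rightarrow> 'b \<Rightarrow> 'b::comm_monoid_add) \<Rightarrow> ('g set \<times> 'g set \<Rightarrow> 'b)
    \<Rightarrow> ('g set \<times> 'g set \<Rightarrow> 'b) \<Rightarrow> ('g set \<times> 'g set \<Rightarrow> 'b)" where
  "mat_mult mul M N = (\<lambda>(x, z). \<Sum>y\<in>{y. M (x, y) \<noteq> 0}. mul (M (x, y)) (N (y, z)))"

definition mat_unit :: "'g set \<Rightarrow> 'g set \<Rightarrow> 'b::zero \<Rightarrow> ('g set \<times> 'g set \<Rightarrow> 'b)" where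
  "mat_unit x y b = (\<lambda>p. if p = (x, y) then b else 0)"

text \<open>Ring isomorphism (rings not necessarily unital; addition is pointwise on both sides).\<close>
definition ring_iso_betw :: "('r \<Rightarrow> 's) \<Rightarrow> 'r::plus set \<Rightarrow> ('r \<Rightarrow> 'r \<Rightarrow> 'r)
    \<Rightarrow> 's::plus set \<Rightarrow> ('s \<Rightarrow> 's \<Rightarrow> 's) \<Rightarrow> bool" where
  "ring_iso_betw \<alpha> CR mulR CS mulS \<longleftrightarrow> bij_betw \<alpha> CR CS \<and>
     (\<forall>x\<in>CR. \<forall>y\<in>CR. \<alpha> (x + y) = \<alpha> x + \<alpha> y \<and> \<alpha> (mulR x y) = mulS (\<alpha> x) (\<alpha> y))"

text \<open>A set of representatives of G/H containing 1, given as a choice function on cosets;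
  hat s = rep (sH) and phi(s) = hat s^{-1} s.\<close>
definition rep_system :: "('g,'m) monoid_scheme \<Rightarrow> 'g set \<Rightarrow> ('g set \<Rightarrow> 'g) \<Rightarrow> bool" where
  "rep_system G H rep \<longleftrightarrow> (\<forall>x\<in>lcosets\<^bsub>G\<^esub> H. rep x \<in> x) \<and> rep H = \<one>\<^bsub>G\<^esub>"

definition phi :: "('g,'m) monoid_scheme \<Rightarrow> 'g set \<Rightarrow> ('g set \<Rightarrow> 'g) \<Rightarrow> 'g \<Rightarrow> 'g" where
  "phi G H rep s = inv\<^bsub>G\<^esub> (rep (s <#\<^bsub>G\<^esub> H)) \<otimes>\<^bsub>G\<^esub> s"

text \<open>The explicit map alpha, i.e. the additive extension of
  xi_H(r,a) \<rtimes> g \<mapsto> e_{rH, g^{-1}rH} \<otimes> (a \<rtimes> phi(g^{-1}r)^{-1}) for representatives r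
  (every element of ind is sum over representatives r of xi_H(r, f(r))).\<close>
definition alpha :: "('g,'m) monoid_scheme \<Rightarrow> 'g set \<Rightarrow> ('g set \<Rightarrow> 'g)
    \<Rightarrow> ('g \<Rightarrow> 'g \<Rightarrow> 'a::ring) \<Rightarrow> ('g set \<times> 'g set \<Rightarrow> 'g \<Rightarrow> 'a)" where
  "alpha G H rep X = (\<lambda>(x, y). \<lambda>k.
     if x \<in> lcosets\<^bsub>G\<^esub> H \<and> y \<in> lcosets\<^bsub>G\<^esub> H \<and> k \<in> H then
       (\<Sum>g\<in>{g\<in>carrier G. X g \<noteq> 0 \<and> (inv\<^bsub>G\<^esub> g \<otimes>\<^bsub>G\<^esub> rep x) <#\<^bsub>G\<^esub> H = y \<and>
                inv\<^bsub>G\<^esub> (phi G H rep (inv\<^bsub>G\<^esub> g \<otimes>\<^bsub>G\<^esub> rep x)) = k}. X g (rep x))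
     else 0)"

text \<open>The module A^{(G)} and the left action of ind \<rtimes> G on it:
  (f \<rtimes> g) \<phi> = f \<cdot> (g \<phi>) (pointwise product with the left translate).\<close>
definition AG_carrier :: "('g,'m) monoid_scheme \<Rightarrow> ('g \<Rightarrow> 'a::zero) set" where
  "AG_carrier G = {\<phi>. (\<forall>g. g \<notin> carrier G \<longrightarrow> \<phi> g = 0) \<and> finite {g. \<phi> g \<noteq> 0}}"

definition indG_AG_act :: "('g,'m) monoid_scheme \<Rightarrow> ('g \<Rightarrow> 'g \<Rightarrow> 'a::ring) \<Rightarrow> ('g \<Rightarrow> 'a) \<Rightarrow> ('g \<Rightarrow> 'a)" where
  "indG_AG_act G X \<phi> = (\<lambda>x. if x \<in> carrier G then
      (\<Sum>g\<in>{g\<in>carrier G. X g \<noteq> 0}. X g x * \<phi> (inv\<^bsub>G\<^esub> g \<otimes>\<^bsub>G\<^esub> x)) else 0)"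

text \<open>Right A\<rtimes>H-module structure on A^{(G)}: [\<phi>(a \<rtimes> h)](g) = h^{-1}(\<phi>(g h^{-1}) a), extended additively.\<close>
definition AG_right_act :: "('g,'m) monoid_scheme \<Rightarrow> 'g set \<Rightarrow> ('g \<Rightarrow> 'a::ring \<Rightarrow> 'a)
    \<Rightarrow> ('g \<Rightarrow> 'a) \<Rightarrow> ('g \<Rightarrow> 'a) \<Rightarrow> ('g \<Rightarrow> 'a)" where
  "AG_right_act G H act \<phi> x = (\<lambda>g. if g \<in> carrier G then
      (\<Sum>h\<in>{h\<in>H. x h \<noteq> 0}. act (inv\<^bsub>G\<^esub> h) (\<phi> (g \<otimes>\<^bsub>G\<^esub> inv\<^bsub>G\<^esub> h) * x h)) else 0)"

definition vec_carrier :: "('g,'m) monoid_scheme \<Rightarrow> 'g set \<Rightarrow> ('g set \<Rightarrow> 'g \<Rightarrow> 'a::ring) set" where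
  "vec_carrier G H = {v. (\<forall>x. v x \<in> AH_carrier H) \<and> (\<forall>x. x \<notin> lcosets\<^bsub>G\<^esub> H \<longrightarrow> v x = 0) \<and>
      finite {x. v x \<noteq> 0}}"

definition mat_vec :: "('b \<Rightarrow> 'b \<Rightarrow> 'b::comm_monoid_add) \<Rightarrow> ('g set \<times> 'g set \<Rightarrow> 'b)
    \<Rightarrow> ('g set \<Rightarrow> 'b) \<Rightarrow> ('g set \<Rightarrow> 'b)" where
  "mat_vec mul M v = (\<lambda>x. \<Sum>y\<in>{y. M (x, y) \<noteq> 0}. mul (M (x, y)) (v y))"

definition vec_right_act :: "('b \<Rightarrow> 'b \<Rightarrow> 'b) \<Rightarrow> ('g set \<Rightarrow> 'b) \<Rightarrow> 'b \<Rightarrow> ('g set \<Rightarrow> 'b)" where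
  "vec_right_act mul v b = (\<lambda>x. mul (v x) b)"

text \<open>The identification (A\<rtimes>H)^{(G/H)} \<cong> A^{(G)} determined by the representatives:
  the vector with entry c \<rtimes> k in position rH (r the representative) goes to the function
  with value k^{-1}(c) at rk and 0 elsewhere.\<close>
definition ident :: "('g,'m) monoid_scheme \<Rightarrow> 'g set \<Rightarrow> ('g \<Rightarrow> 'a::ring \<Rightarrow> 'a) \<Rightarrow> ('g set \<Rightarrow> 'g)
    \<Rightarrow> ('g set \<Rightarrow> 'g \<Rightarrow> 'a) \<Rightarrow> ('g \<Rightarrow> 'a)" where
  "ident G H act rep v = (\<lambda>g. if g \<in> carrier G then
      act (inv\<^bsub>G\<^esub> (phi G H rep g)) (v (g <#\<^bsub>G\<^esub> H) (phi G H rep g)) else 0)"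

end

theory Submission
  imports Defs
begin

(*
  Fix representatives rep of G/H with rep H = 1 and factor t = rep(tH) \<phi>(t), \<phi>(t) \<in> H.
  The argument rests on one combinatorial fact: for a base point r the map
  g \<mapsto> ((g\<inverse> r)H, \<phi>(g\<inverse> r)\<inverse>) is a bijection G \<cong> G/H \<times> H (coset_coords, inverse
  coords_elem).  With it the defining sum of alpha collapses to a single term
  (alpha_closed_form), and any sum over the nonzero entries of a row of alpha X becomes
  a sum over the support of X (alpha_row_sum).  Multiplicativity of alpha and its
  compatibility with the representations on A^{(G)} are both this reindexing followed
  by a pointwise computation; bijectivity comes from an explicit inverse.
*)

lemma sum_fun_apply: "(\<Sum>i\<in>S. f i) a = (\<Sum>i\<in>S. f i a)"
  by (induction S rule: infinite_finite_induct) auto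

locale group_subgroup = group G for G :: "('g,'m) monoid_scheme" (structure) +
  fixes H :: "'g set"
  assumes sub: "subgroup H G"
begin

lemma H_carrier: "h \<in> H \<Longrightarrow> h \<in> carrier G"
  by (rule subgroup.mem_carrier[OF sub])

lemma H_mult: "a \<in> H \<Longrightarrow> b \<in> H \<Longrightarrow> a \<otimes> b \<in> H"
  by (rule subgroup.m_closed[OF sub])

lemma H_inv: "a \<in> H \<Longrightarrow> inv a \<in> H"
  by (rule subgroup.m_inv_closed[OF sub])

lemma H_one: "\<one> \<in> H"
  by (rule subgroup.one_closed[OF sub])

lemma mem_coset: "a \<in> carrier G \<Longrightarrow> b \<in> a <# H \<longleftrightarrow> b \<in> carrier G \<and> inv a \<otimes> b \<in> H"
  using subgroup.lcos_module_imp[OF sub is_group] subgroup.lcos_module_rev[OF sub is_group]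
    l_coset_carrier[OF _ _ sub] by blast

lemma coset_eq_iff:
  assumes "a \<in> carrier G" "b \<in> carrier G"
  shows "a <# H = b <# H \<longleftrightarrow> inv a \<otimes> b \<in> H"
proof
  assume "a <# H = b <# H"
  then show "inv a \<otimes> b \<in> H"
    using lcos_self[OF assms(2) sub] mem_coset[OF assms(1)] by simp
next
  assume "inv a \<otimes> b \<in> H"
  then show "a <# H = b <# H"
    using l_repr_independence[OF _ assms(1) sub] mem_coset[OF assms(1)] assms(2) by blast
qed

lemma coset_mult_H: "a \<in> carrier G \<Longrightarrow> h \<in> H \<Longrightarrow> (a \<otimes> h) <# H = a <# H"
  using l_repr_independence[OF _ _ sub, of "a \<otimes> h" a] by (auto simp: l_coset_def)

lemma in_lcosets: "a \<in> carrier G \<Longrightarrow> a <# H \<in> lcosets H"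
  by (auto simp: LCOSETS_def)

lemma one_coset: "\<one> <# H = H"
  using lcos_mult_one subgroup.subset[OF sub] by blast

lemma H_lcoset: "H \<in> lcosets H"
  using in_lcosets[OF one_closed] one_coset by simp

end

locale subgroup_reps = group_subgroup +
  fixes rep :: "'g set \<Rightarrow> 'g"
  assumes reps: "rep_system G H rep"
begin

lemma rep_in: "x \<in> lcosets H \<Longrightarrow> rep x \<in> x"
  using reps by (simp add: rep_system_def)

lemma rep_H: "rep H = \<one>"
  using reps by (simp add: rep_system_def)

lemma lcosetsE: "x \<in> lcosets H \<Longrightarrow> (\<And>a. a \<in> carrier G \<Longrightarrow> x = a <# H \<Longrightarrow> P) \<Longrightarrow> P"
  by (auto simp: LCOSETS_def)

lemma rep_G: "x \<in> lcosets H \<Longrightarrow> rep x \<in> carrier G"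
  by (metis lcosetsE rep_in l_coset_carrier sub)

lemma rep_coset: "x \<in> lcosets H \<Longrightarrow> rep x <# H = x"
  by (metis lcosetsE rep_in l_repr_independence sub)

lemma coset_rep_mult: "x \<in> lcosets H \<Longrightarrow> k \<in> H \<Longrightarrow> (rep x \<otimes> k) <# H = x"
  using coset_mult_H rep_G rep_coset by simp

lemma rep_in_H: "x \<in> lcosets H \<Longrightarrow> rep x \<in> H \<longleftrightarrow> x = H"
  using coset_eq_iff[OF one_closed rep_G, of x] rep_G by (simp add: rep_coset one_coset eq_commute)

lemma rep_in_coset: "x \<in> lcosets H \<Longrightarrow> s \<in> carrier G \<Longrightarrow> rep x \<in> s <# H \<longleftrightarrow> x = s <# H"
  using mem_coset[of s "rep x"] coset_eq_iff[of s "rep x"] rep_G rep_coset by auto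

lemma phi_H: "t \<in> carrier G \<Longrightarrow> phi G H rep t \<in> H"
  unfolding phi_def by (metis coset_eq_iff in_lcosets rep_G rep_coset)

lemma phi_G: "t \<in> carrier G \<Longrightarrow> phi G H rep t \<in> carrier G"
  using phi_H H_carrier by blast

lemma rep_phi: "t \<in> carrier G \<Longrightarrow> rep (t <# H) \<otimes> phi G H rep t = t"
  unfolding phi_def using rep_G[OF in_lcosets] by (simp add: m_assoc[symmetric])

lemma phi_mult: "t \<in> carrier G \<Longrightarrow> h \<in> H \<Longrightarrow> phi G H rep (t \<otimes> h) = phi G H rep t \<otimes> h"
  unfolding phi_def using coset_mult_H rep_G[OF in_lcosets] H_carrier by (simp add: m_assoc)

lemma phi_rep: "x \<in> lcosets H \<Longrightarrow> k \<in> H \<Longrightarrow> phi G H rep (rep x \<otimes> k) = k"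
  unfolding phi_def using coset_rep_mult rep_G H_carrier by (simp add: m_assoc[symmetric])

text \<open>Coordinates of G relative to a base point r: the map
  g \<mapsto> ((g\<inverse> r)H, \<phi>(g\<inverse> r)\<inverse>) is a bijection G \<rightarrow> G/H \<times> H with inverse
  (y, k) \<mapsto> r k (rep y)\<inverse>.  With r the representative of a row coset x, these
  coordinates say in which column y and at which H-component k the element
  X(g) of ind \<rtimes> G contributes to the matrix alpha X.\<close>
definition coset_coords :: "'g \<Rightarrow> 'g \<Rightarrow> 'g set \<times> 'g" where
  "coset_coords r g = ((inv g \<otimes> r) <# H, inv (phi G H rep (inv g \<otimes> r)))"

definition coords_elem :: "'g \<Rightarrow> 'g set \<times> 'g \<Rightarrow> 'g" where
  "coords_elem r = (\<lambda>(y, k). r \<otimes> k \<otimes> inv (rep y))"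

lemma coords_elem_carrier:
  "r \<in> carrier G \<Longrightarrow> y \<in> lcosets H \<Longrightarrow> k \<in> H \<Longrightarrow> coords_elem r (y, k) \<in> carrier G"
  unfolding coords_elem_def using rep_G H_carrier by simp

lemma coset_coords_carrier:
  "r \<in> carrier G \<Longrightarrow> g \<in> carrier G \<Longrightarrow> coset_coords r g \<in> (lcosets H) \<times> H"
  unfolding coset_coords_def using in_lcosets phi_H H_inv by simp

lemma coset_coords_elem:
  assumes r: "r \<in> carrier G" and y: "y \<in> lcosets H" and k: "k \<in> H"
  shows "coset_coords r (coords_elem r (y, k)) = (y, k)"
proof -
  have "inv (r \<otimes> k \<otimes> inv (rep y)) \<otimes> r = rep y \<otimes> inv k"
    using r rep_G[OF y] H_carrier[OF k] by (simp add: m_assoc inv_mult_group)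
  then show ?thesis
    using coset_rep_mult[OF y H_inv[OF k]] phi_rep[OF y H_inv[OF k]] H_carrier[OF k]
    by (simp add: coset_coords_def coords_elem_def)
qed

lemma coords_elem_coords:
  assumes r: "r \<in> carrier G" and g: "g \<in> carrier G"
  shows "coords_elem r (coset_coords r g) = g"
proof -
  define t where "t = inv g \<otimes> r"
  have t: "t \<in> carrier G" using r g by (simp add: t_def)
  have "r \<otimes> inv (phi G H rep t) \<otimes> inv (rep (t <# H)) = r \<otimes> inv (rep (t <# H) \<otimes> phi G H rep t)"
    using r phi_G[OF t] rep_G[OF in_lcosets[OF t]] by (simp add: m_assoc inv_mult_group)
  also have "\<dots> = g"
    using rep_phi[OF t] r g by (simp add: t_def inv_mult_group m_assoc[symmetric])
  finally show ?thesis by (simp add: coords_elem_def coset_coords_def t_def)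
qed

lemma coords_elem_iff:
  assumes "r \<in> carrier G" "g \<in> carrier G" "y \<in> lcosets H" "k \<in> H"
  shows "g = coords_elem r (y, k) \<longleftrightarrow> coset_coords r g = (y, k)"
  using coset_coords_elem coords_elem_coords assms by metis

lemma alpha_closed_form:
  "alpha G H rep X (x, y) k = (if x \<in> lcosets H \<and> y \<in> lcosets H \<and> k \<in> H
     then X (coords_elem (rep x) (y, k)) (rep x) else 0)"
proof (cases "x \<in> lcosets H \<and> y \<in> lcosets H \<and> k \<in> H")
  case True
  define g0 where "g0 = coords_elem (rep x) (y, k)"
  have g0: "g0 \<in> carrier G" using True rep_G coords_elem_carrier by (simp add: g0_def)
  have "{g\<in>carrier G. X g \<noteq> 0 \<and> coset_coords (rep x) g = (y, k)} = (if X g0 \<noteq> 0 then {g0} else {})"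
    using coords_elem_iff[of "rep x" _ y k] True rep_G g0 by (auto simp: g0_def)
  then show ?thesis
    using True by (simp add: alpha_def coset_coords_def g0_def)
qed (auto simp: alpha_def)

lemma alpha_add: "alpha G H rep (X + Y) = alpha G H rep X + alpha G H rep Y"
  by (auto simp: fun_eq_iff alpha_closed_form)

text \<open>Naturality: alpha commutes with applying any zero-preserving map entrywise;
  in particular with every equivariant ring homomorphism A \<rightarrow> B.\<close>
lemma alpha_natural:
  assumes "f 0 = 0"
  shows "alpha G H rep (\<lambda>g. f \<circ> X g) = (\<lambda>p. f \<circ> alpha G H rep X p)"
  using assms by (auto simp: fun_eq_iff alpha_closed_form)

lemma alpha_nonzero_iff:
  "alpha G H rep X (x, y) k \<noteq> 0 \<longleftrightarrow>
     x \<in> lcosets H \<and> y \<in> lcosets H \<and> k \<in> H \<and> X (coords_elem (rep x) (y, k)) (rep x) \<noteq> 0"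
  by (auto simp: alpha_closed_form)

text \<open>A row of alpha X has finitely many nonzero entries, each finitely supported,
  as soon as X has finite support: they are images of the support under the
  coordinate map.\<close>
lemma alpha_row_support:
  assumes fX: "finite {g. X g \<noteq> 0}" and x: "x \<in> lcosets H"
  shows "(SIGMA y:{y. alpha G H rep X (x, y) \<noteq> 0}. {k. alpha G H rep X (x, y) k \<noteq> 0})
           \<subseteq> coset_coords (rep x) ` {g. X g \<noteq> 0}"
proof clarify
  fix y k assume "alpha G H rep X (x, y) k \<noteq> 0"
  then have yk: "y \<in> lcosets H" "k \<in> H" "X (coords_elem (rep x) (y, k)) \<noteq> 0"
    by (auto simp: alpha_nonzero_iff)
  then show "(y, k) \<in> coset_coords (rep x) ` {g. X g \<noteq> 0}"
    using coset_coords_elem[OF rep_G[OF x] yk(1,2)] by force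
qed

lemma alpha_row_finite:
  assumes fX: "finite {g. X g \<noteq> 0}" and x: "x \<in> lcosets H"
  shows "finite {y. alpha G H rep X (x, y) \<noteq> 0}"
    and "finite {k. alpha G H rep X (x, y) k \<noteq> 0}"
proof -
  have fin: "finite (SIGMA y:{y. alpha G H rep X (x, y) \<noteq> 0}. {k. alpha G H rep X (x, y) k \<noteq> 0})"
    by (rule finite_subset[OF alpha_row_support[OF assms] finite_imageI[OF fX]])
  have "{y. alpha G H rep X (x, y) \<noteq> 0} = fst ` (SIGMA y:{y. alpha G H rep X (x, y) \<noteq> 0}. {k. alpha G H rep X (x, y) k \<noteq> 0})"
    by (force simp: fun_eq_iff)
  then show "finite {y. alpha G H rep X (x, y) \<noteq> 0}" using fin by (metis finite_imageI)
  show "finite {k. alpha G H rep X (x, y) k \<noteq> 0}"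
  proof (cases "alpha G H rep X (x, y) = 0")
    case False
    then have "{k. alpha G H rep X (x, y) k \<noteq> 0} \<subseteq> snd ` (SIGMA y:{y. alpha G H rep X (x, y) \<noteq> 0}. {k. alpha G H rep X (x, y) k \<noteq> 0})"
      by force
    then show ?thesis using fin finite_subset by blast
  qed simp
qed

text \<open>The key reindexing: summing any expression over the nonzero entries of row x
  of alpha X is the same as summing over the support of X, each g \<in> G
  contributing at its coordinates relative to rep x.\<close>
lemma alpha_row_sum:
  fixes \<Phi> :: "'g set \<Rightarrow> 'g \<Rightarrow> 'b::ring \<Rightarrow> 'c::comm_monoid_add"
  assumes fX: "finite {g. X g \<noteq> 0}" and x: "x \<in> lcosets H" and \<Phi>0: "\<And>y h. \<Phi> y h 0 = 0"
  shows "(\<Sum>y\<in>{y. alpha G H rep X (x, y) \<noteq> 0}. \<Sum>h\<in>{h\<in>H. alpha G H rep X (x, y) h \<noteq> 0}.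
            \<Phi> y h (alpha G H rep X (x, y) h))
       = (\<Sum>g\<in>{g\<in>carrier G. X g \<noteq> 0}.
            \<Phi> ((inv g \<otimes> rep x) <# H) (inv (phi G H rep (inv g \<otimes> rep x))) (X g (rep x)))"
proof -
  define r where "r = rep x"
  have r: "r \<in> carrier G" using rep_G[OF x] by (simp add: r_def)
  define P where "P = {(y, h). y \<in> lcosets H \<and> h \<in> H \<and> X (coords_elem r (y, h)) r \<noteq> 0}"
  define T where "T = {g\<in>carrier G. X g r \<noteq> 0}"
  have "(\<Sum>y\<in>{y. alpha G H rep X (x, y) \<noteq> 0}. \<Sum>h\<in>{h\<in>H. alpha G H rep X (x, y) h \<noteq> 0}.
            \<Phi> y h (alpha G H rep X (x, y) h))
      = (\<Sum>(y, h)\<in>(SIGMA y:{y. alpha G H rep X (x, y) \<noteq> 0}. {h\<in>H. alpha G H rep X (x, y) h \<noteq> 0}).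
            \<Phi> y h (alpha G H rep X (x, y) h))"
    using alpha_row_finite[OF fX x] by (intro sum.Sigma) auto
  also have "(SIGMA y:{y. alpha G H rep X (x, y) \<noteq> 0}. {h\<in>H. alpha G H rep X (x, y) h \<noteq> 0}) = P"
    using x by (auto simp: P_def r_def alpha_nonzero_iff fun_eq_iff)
  also have "(\<Sum>(y, h)\<in>P. \<Phi> y h (alpha G H rep X (x, y) h))
           = (\<Sum>(y, h)\<in>P. \<Phi> y h (X (coords_elem r (y, h)) r))"
    by (rule sum.cong) (auto simp: P_def r_def alpha_closed_form x)
  also have "\<dots> = (\<Sum>g\<in>T. case coset_coords r g of (y, h) \<Rightarrow> \<Phi> y h (X g r))"
  proof (rule sum.reindex_bij_witness[where j = "coords_elem r" and i = "coset_coords r"])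
    fix g assume g: "g \<in> T"
    then show "coords_elem r (coset_coords r g) = g"
      using coords_elem_coords[OF r] by (simp add: T_def)
    show "coset_coords r g \<in> P"
      using g coset_coords_carrier[OF r, of g] coords_elem_coords[OF r, of g]
      by (cases "coset_coords r g") (auto simp: P_def T_def)
  qed (auto simp: P_def T_def coset_coords_elem[OF r] coords_elem_carrier[OF r])
  also have "\<dots> = (\<Sum>g\<in>{g\<in>carrier G. X g \<noteq> 0}. case coset_coords r g of (y, h) \<Rightarrow> \<Phi> y h (X g r))"
    using fX by (intro sum.mono_neutral_left) (auto simp: T_def \<Phi>0 split: prod.split)
  finally show ?thesis by (simp only: coset_coords_def r_def prod.case)
qed

text \<open>Value of alpha on a generator xi_H(s, a) \<rtimes> g: a single matrix unit in position
  (sH, g\<inverse>sH).  Only the shape of xi matters here, not any property of the action.\<close>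
lemma alpha_generator:
  assumes s: "s \<in> carrier G" and g: "g \<in> carrier G"
  shows "alpha G H rep (cp_single (xi G H act s a) g) =
          mat_unit (s <# H) ((inv g \<otimes> s) <# H)
            (cp_single (act (phi G H rep s) a)
               (phi G H rep s \<otimes> inv (phi G H rep (inv g \<otimes> s))))"
proof (intro ext, clarify)
  fix x y k
  define r where "r = rep (s <# H)"
  define ps where "ps = phi G H rep s"
  define t where "t = inv g \<otimes> r"
  have sl: "s <# H \<in> lcosets H" using in_lcosets[OF s] .
  have r: "r \<in> carrier G" using rep_G[OF sl] by (simp add: r_def)
  have ps: "ps \<in> H" using phi_H[OF s] by (simp add: ps_def)
  have t: "t \<in> carrier G" using g r by (simp add: t_def)
  have s_factor: "s = r \<otimes> ps" using rep_phi[OF s] by (simp add: r_def ps_def)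
  have gs: "inv g \<otimes> s = t \<otimes> ps" using s_factor g r H_carrier[OF ps] by (simp add: t_def m_assoc)
  have col: "(inv g \<otimes> s) <# H = t <# H" using gs coset_mult_H[OF t ps] by simp
  have comp: "ps \<otimes> inv (phi G H rep (inv g \<otimes> s)) = inv (phi G H rep t)"
    using gs phi_mult[OF t ps] phi_G[OF t] H_carrier[OF ps] by (simp add: inv_mult_group m_assoc[symmetric])
  have xi_r: "xi G H act s a r = act ps a"
  proof -
    have "inv (inv s \<otimes> r) = ps" using s_factor r H_carrier[OF ps] by (simp add: inv_mult_group m_assoc)
    then show ?thesis using rep_in_coset[OF sl s] by (simp add: xi_def r_def)
  qed
  show "alpha G H rep (cp_single (xi G H act s a) g) (x, y) k =
        mat_unit (s <# H) ((inv g \<otimes> s) <# H)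
          (cp_single (act ps a) (ps \<otimes> inv (phi G H rep (inv g \<otimes> s)))) (x, y) k"
  proof (cases "x = s <# H \<and> y \<in> lcosets H \<and> k \<in> H")
    case True
    then have "g = coords_elem r (y, k) \<longleftrightarrow> coset_coords r g = (y, k)"
      using coords_elem_iff[OF r g] by blast
    then have "coords_elem r (y, k) = g \<longleftrightarrow> y = t <# H \<and> k = inv (phi G H rep t)"
      unfolding coset_coords_def t_def by auto
    then show ?thesis
      using True sl xi_r col comp by (auto simp: alpha_closed_form cp_single_def mat_unit_def r_def)
  next
    case False
    have "(inv g \<otimes> s) <# H \<in> lcosets H" "ps \<otimes> inv (phi G H rep (inv g \<otimes> s)) \<in> H"
      using in_lcosets H_mult H_inv phi_H ps g s by simp_all
    then show ?thesis
      using False rep_in_coset[OF _ s]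
      by (auto simp: alpha_closed_form cp_single_def xi_def mat_unit_def)
  qed
qed

lemma alpha_corner:
  assumes act_one: "\<And>a. act \<one> a = a" and b: "b \<in> AH_carrier H"
  shows "alpha G H rep (\<lambda>g. xi G H act \<one> (b g)) = mat_unit H H b"
proof (intro ext, clarify)
  fix x y k
  have b0: "k \<notin> H \<Longrightarrow> b k = 0" for k using b by (simp add: cp_carrier_def)
  have xi_one: "xi G H act \<one> c \<one> = c" for c
    using H_one act_one by (simp add: xi_def one_coset)
  show "alpha G H rep (\<lambda>g. xi G H act \<one> (b g)) (x, y) k = mat_unit H H b (x, y) k"
  proof (cases "x = H \<and> y \<in> lcosets H \<and> k \<in> H")
    case True
    then have y: "y \<in> lcosets H" and k: "k \<in> H" by auto
    have entry: "alpha G H rep (\<lambda>g. xi G H act \<one> (b g)) (x, y) k = b (k \<otimes> inv (rep y))"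
      using True H_lcoset H_carrier[OF k] by (simp add: alpha_closed_form coords_elem_def rep_H xi_one)
    have "rep y = inv (k \<otimes> inv (rep y)) \<otimes> k"
      using H_carrier[OF k] rep_G[OF y] by (simp add: inv_mult_group m_assoc)
    then have "k \<otimes> inv (rep y) \<in> H \<Longrightarrow> rep y \<in> H"
      using H_mult[OF H_inv k] by metis
    then have "y \<noteq> H \<Longrightarrow> b (k \<otimes> inv (rep y)) = 0"
      using rep_in_H[OF y] b0 by blast
    then show ?thesis
      using entry True H_carrier[OF k] by (auto simp: mat_unit_def rep_H)
  next
    case False
    have "x \<in> lcosets H \<Longrightarrow> x \<noteq> H \<Longrightarrow> xi G H act \<one> c (rep x) = 0" for c
      using rep_in_H by (simp add: xi_def one_coset)
    then show ?thesis
      using False H_lcoset b0 by (auto simp: alpha_closed_form mat_unit_def)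
  qed
qed

end

locale H_ring_reps = subgroup_reps G H rep
    for G :: "('g,'m) monoid_scheme" (structure) and H :: "'g set" and rep :: "'g set \<Rightarrow> 'g" +
  fixes act :: "'g \<Rightarrow> 'r::ring \<Rightarrow> 'r"
  assumes H_ring: "H_ring G H act"
begin

lemma act_add: "h \<in> H \<Longrightarrow> act h (a + b) = act h a + act h b"
  using H_ring by (simp add: H_ring_def)

lemma act_mult: "h \<in> H \<Longrightarrow> act h (a * b) = act h a * act h b"
  using H_ring by (simp add: H_ring_def)

lemma act_one: "act \<one> a = a"
  using H_ring by (simp add: H_ring_def)

lemma act_comp: "h \<in> H \<Longrightarrow> h' \<in> H \<Longrightarrow> act (h \<otimes> h') a = act h (act h' a)"
  using H_ring by (simp add: H_ring_def)

lemma act_zero: "h \<in> H \<Longrightarrow> act h 0 = 0"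
  using act_add[of h 0 0] by simp

lemma act_inv_cancel: "h \<in> H \<Longrightarrow> act (inv h) (act h a) = a"
  using act_comp[of "inv h" h a] H_inv H_carrier act_one by simp

lemma act_eq_0_iff: "h \<in> H \<Longrightarrow> act h a = 0 \<longleftrightarrow> a = 0"
  by (metis act_inv_cancel act_zero)

lemma act_sum: "h \<in> H \<Longrightarrow> act h (\<Sum>i\<in>S. f i) = (\<Sum>i\<in>S. act h (f i))"
  using sum_comp_morphism[of "act h" f S] act_zero act_add by (simp add: comp_def)

lemma indG_carrierD:
  assumes "X \<in> indG_carrier G H act"
  shows "g \<notin> carrier G \<Longrightarrow> X g = 0"
    and "finite {g. X g \<noteq> 0}"
    and "t \<notin> carrier G \<Longrightarrow> X g t = 0"
    and "t \<in> carrier G \<Longrightarrow> h \<in> H \<Longrightarrow> X g (t \<otimes> h) = act (inv h) (X g t)"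
    and "finite {t <# H | t. t \<in> carrier G \<and> X g t \<noteq> 0}"
  using assms H_inv act_zero by (cases "g \<in> carrier G"; auto simp: cp_carrier_def ind_def)+

lemma indG_value_rep:
  assumes X: "X \<in> indG_carrier G H act" and t: "t \<in> carrier G"
  shows "X g t = act (inv (phi G H rep t)) (X g (rep (t <# H)))"
  using indG_carrierD(4)[OF X rep_G[OF in_lcosets[OF t]] phi_H[OF t]] rep_phi[OF t] by simp

text \<open>Reading row tH of alpha Y from an arbitrary point t of the coset instead of its
  representative: the H-components shift by \<phi>(t) and the values by the action.\<close>
lemma alpha_entry_at:
  assumes Y: "Y \<in> indG_carrier G H act" and t: "t \<in> carrier G"
    and z: "z \<in> lcosets H" and k: "k \<in> H"
  shows "act (inv (phi G H rep t)) (alpha G H rep Y (t <# H, z) (phi G H rep t \<otimes> k))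
           = Y (t \<otimes> k \<otimes> inv (rep z)) t"
proof -
  define q where "q = rep (t <# H)"
  have q: "q \<in> carrier G" using rep_G[OF in_lcosets[OF t]] by (simp add: q_def)
  have "coords_elem q (z, phi G H rep t \<otimes> k) = t \<otimes> k \<otimes> inv (rep z)"
    using rep_phi[OF t] q phi_G[OF t] H_carrier[OF k] rep_G[OF z]
    by (simp add: coords_elem_def q_def m_assoc[symmetric])
  then show ?thesis
    using in_lcosets[OF t] z H_mult[OF phi_H[OF t] k] indG_value_rep[OF Y t]
    by (simp add: alpha_closed_form q_def)
qed

text \<open>alpha is multiplicative: the product in ind \<rtimes> G, evaluated at a position,
  is reindexed row by row via alpha_row_sum into the matrix product.\<close>
lemma alpha_mult:
  assumes X: "X \<in> indG_carrier G H act" and Y: "Y \<in> indG_carrier G H act"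
  shows "alpha G H rep (indG_mult G X Y) = mat_mult (AH_mult G H act) (alpha G H rep X) (alpha G H rep Y)"
proof (intro ext, clarify)
  fix x z k
  show "alpha G H rep (indG_mult G X Y) (x, z) k
        = mat_mult (AH_mult G H act) (alpha G H rep X) (alpha G H rep Y) (x, z) k"
  proof (cases "x \<in> lcosets H \<and> z \<in> lcosets H \<and> k \<in> H")
    case True
    then have x: "x \<in> lcosets H" and z: "z \<in> lcosets H" and k: "k \<in> H" by auto
    define r where "r = rep x"
    define g0 where "g0 = coords_elem r (z, k)"
    have r: "r \<in> carrier G" using rep_G[OF x] by (simp add: r_def)
    have g0: "g0 \<in> carrier G" using coords_elem_carrier[OF r z k] by (simp add: g0_def)
    have "mat_mult (AH_mult G H act) (alpha G H rep X) (alpha G H rep Y) (x, z) k =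
        (\<Sum>y\<in>{y. alpha G H rep X (x, y) \<noteq> 0}. \<Sum>h\<in>{h\<in>H. alpha G H rep X (x, y) h \<noteq> 0}.
            (\<lambda>y h a. a * act h (alpha G H rep Y (y, z) (inv h \<otimes> k))) y h (alpha G H rep X (x, y) h))"
      using k by (simp add: mat_mult_def sum_fun_apply cp_mult_def)
    also have "\<dots> = (\<Sum>g\<in>{g\<in>carrier G. X g \<noteq> 0}.
          X g r * act (inv (phi G H rep (inv g \<otimes> r)))
            (alpha G H rep Y ((inv g \<otimes> r) <# H, z) (phi G H rep (inv g \<otimes> r) \<otimes> k)))"
      using indG_carrierD(2)[OF X] phi_G r by (subst alpha_row_sum[OF _ x]) (simp_all add: r_def)
    also have "\<dots> = (\<Sum>g\<in>{g\<in>carrier G. X g \<noteq> 0}. X g r * Y (inv g \<otimes> g0) (inv g \<otimes> r))"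
    proof (rule sum.cong[OF refl])
      fix g assume "g \<in> {g\<in>carrier G. X g \<noteq> 0}"
      then have g: "g \<in> carrier G" by simp
      have "inv g \<otimes> r \<otimes> k \<otimes> inv (rep z) = inv g \<otimes> g0"
        using g r H_carrier[OF k] rep_G[OF z] by (simp add: g0_def coords_elem_def m_assoc)
      then show "X g r * act (inv (phi G H rep (inv g \<otimes> r)))
            (alpha G H rep Y ((inv g \<otimes> r) <# H, z) (phi G H rep (inv g \<otimes> r) \<otimes> k))
          = X g r * Y (inv g \<otimes> g0) (inv g \<otimes> r)"
        using alpha_entry_at[OF Y _ z k, of "inv g \<otimes> r"] g r by simp
    qed
    also have "\<dots> = alpha G H rep (indG_mult G X Y) (x, z) k"
      using True g0 r by (simp add: alpha_closed_form cp_mult_def sum_fun_apply ind_act_def r_def g0_def)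
    finally show ?thesis by simp
  next
    case False
    have "AH_mult G H act (alpha G H rep X (x, y)) (alpha G H rep Y (y, z)) k = 0"
      if "alpha G H rep X (x, y) \<noteq> 0" for y
      using False that act_zero by (auto simp: cp_mult_def alpha_closed_form fun_eq_iff)
    then show ?thesis
      using False by (auto simp: alpha_closed_form mat_mult_def sum_fun_apply intro!: sum.neutral)
  qed
qed

lemma alpha_in_mat_carrier:
  assumes X: "X \<in> indG_carrier G H act"
  shows "alpha G H rep X \<in> mat_carrier G H (AH_carrier H)"
proof -
  have fX: "finite {g. X g \<noteq> 0}" using indG_carrierD(2)[OF X] .
  have entries: "alpha G H rep X (x, y) \<in> AH_carrier H" for x y
  proof -
    have "finite {k. alpha G H rep X (x, y) k \<noteq> 0}"
      using alpha_row_finite(2)[OF fX] by (cases "x \<in> lcosets H") (auto simp: alpha_closed_form)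
    then show ?thesis by (auto simp: cp_carrier_def alpha_closed_form)
  qed
  define U where "U = (\<Union>g\<in>{g. X g \<noteq> 0}. {t <# H | t. t \<in> carrier G \<and> X g t \<noteq> 0})"
  have U: "finite U" unfolding U_def using fX indG_carrierD(5)[OF X] by auto
  have "{p. alpha G H rep X p \<noteq> 0} \<subseteq> (SIGMA x:U. {y. alpha G H rep X (x, y) \<noteq> 0})"
  proof
    fix p assume "p \<in> {p. alpha G H rep X p \<noteq> 0}"
    then obtain x y where p: "p = (x, y)" and nz: "alpha G H rep X (x, y) \<noteq> 0" by (cases p) auto
    then obtain k where "alpha G H rep X (x, y) k \<noteq> 0" by (auto simp: fun_eq_iff)
    then have x: "x \<in> lcosets H" and "X (coords_elem (rep x) (y, k)) (rep x) \<noteq> 0"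
      by (auto simp: alpha_nonzero_iff)
    then have "x \<in> U"
      unfolding U_def using rep_coset[OF x] rep_G[OF x] by (force simp: fun_eq_iff)
    then show "p \<in> (SIGMA x:U. {y. alpha G H rep X (x, y) \<noteq> 0})" using p nz by simp
  qed
  moreover have "finite (SIGMA x:U. {y. alpha G H rep X (x, y) \<noteq> 0})"
    using U alpha_row_finite(1)[OF fX] in_lcosets by (auto simp: U_def)
  ultimately have "finite {p. alpha G H rep X p \<noteq> 0}" by (rule finite_subset)
  then show ?thesis using entries by (auto simp: mat_carrier_def alpha_closed_form fun_eq_iff)
qed

definition alpha_inv :: "('g set \<times> 'g set \<Rightarrow> 'g \<Rightarrow> 'r) \<Rightarrow> 'g \<Rightarrow> 'g \<Rightarrow> 'r" where
  "alpha_inv M = (\<lambda>g t. if g \<in> carrier G \<and> t \<in> carrier G then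
     (case coset_coords (rep (t <# H)) g of (z, k) \<Rightarrow> act (inv (phi G H rep t)) (M (t <# H, z) k))
     else 0)"

lemma alpha_inv_alpha:
  assumes X: "X \<in> indG_carrier G H act"
  shows "alpha_inv (alpha G H rep X) = X"
proof (intro ext)
  fix g t
  show "alpha_inv (alpha G H rep X) g t = X g t"
  proof (cases "g \<in> carrier G \<and> t \<in> carrier G")
    case True
    define r where "r = rep (t <# H)"
    have r: "r \<in> carrier G" using True rep_G[OF in_lcosets] by (simp add: r_def)
    obtain z k where zk: "coset_coords r g = (z, k)" by fastforce
    have "z \<in> lcosets H" "k \<in> H" "coords_elem r (z, k) = g"
      using coset_coords_carrier[OF r, of g] coords_elem_coords[OF r, of g] True zk by auto
    then show ?thesis
      using True zk indG_value_rep[OF X, of t g] in_lcosets[of t]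
      by (simp add: alpha_inv_def alpha_closed_form r_def)
  next
    case False
    then show ?thesis using indG_carrierD(1,3)[OF X] by (auto simp: alpha_inv_def)
  qed
qed

lemma alpha_alpha_inv:
  assumes M: "M \<in> mat_carrier G H (AH_carrier H)"
  shows "alpha G H rep (alpha_inv M) = M"
proof (intro ext, clarify)
  fix x y k
  show "alpha G H rep (alpha_inv M) (x, y) k = M (x, y) k"
  proof (cases "x \<in> lcosets H \<and> y \<in> lcosets H \<and> k \<in> H")
    case True
    then have x: "x \<in> lcosets H" and y: "y \<in> lcosets H" and k: "k \<in> H" by auto
    have "phi G H rep (rep x) = \<one>" using phi_rep[OF x H_one] rep_G[OF x] by simp
    then show ?thesis
      using True rep_G[OF x] rep_coset[OF x] coords_elem_carrier[OF rep_G[OF x] y k]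
        coset_coords_elem[OF rep_G[OF x] y k] act_one
      by (simp add: alpha_closed_form alpha_inv_def)
  next
    case False
    then have "M (x, y) k = 0"
      using M by (auto simp: mat_carrier_def cp_carrier_def)
    then show ?thesis using False by (auto simp: alpha_closed_form)
  qed
qed

text \<open>alpha_inv M lies in ind \<rtimes> G: equivariance in t comes from \<phi>(th) = \<phi>(t)h,
  finiteness from that of M.\<close>
lemma alpha_inv_in_indG_carrier:
  assumes M: "M \<in> mat_carrier G H (AH_carrier H)"
  shows "alpha_inv M \<in> indG_carrier G H act"
proof -
  have M_fin: "finite {p. M p \<noteq> 0}" and M_entry_fin: "finite {k. M p k \<noteq> 0}" for p
    using M by (auto simp: mat_carrier_def cp_carrier_def) (metis prod.collapse)
  have equivariant: "alpha_inv M g (t \<otimes> h) = act (inv h) (alpha_inv M g t)"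
    if g: "g \<in> carrier G" and t: "t \<in> carrier G" and h: "h \<in> H" for g t h
  proof -
    have "inv (phi G H rep t \<otimes> h) = inv h \<otimes> inv (phi G H rep t)"
      using phi_G[OF t] H_carrier[OF h] by (simp add: inv_mult_group)
    then show ?thesis
      using g t h coset_mult_H[OF t h] phi_mult[OF t h] H_carrier[OF h] phi_H[OF t]
      by (simp add: alpha_inv_def act_comp H_inv split: prod.split)
  qed
  have coset_support: "{t <# H | t. t \<in> carrier G \<and> alpha_inv M g t \<noteq> 0} \<subseteq> fst ` {p. M p \<noteq> 0}" for g
  proof clarify
    fix t assume t: "t \<in> carrier G" and "alpha_inv M g t \<noteq> 0"
    then obtain z k where "M (t <# H, z) k \<noteq> 0"
      by (auto simp: alpha_inv_def split: if_splits prod.splits) (metis act_zero H_inv phi_H)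
    then show "t <# H \<in> fst ` {p. M p \<noteq> 0}" by (force simp: fun_eq_iff)
  qed
  have support: "{g. alpha_inv M g \<noteq> 0} \<subseteq>
      (\<lambda>(p, k). coords_elem (rep (fst p)) (snd p, k)) ` (SIGMA p:{p. M p \<noteq> 0}. {k. M p k \<noteq> 0})"
  proof
    fix g assume "g \<in> {g. alpha_inv M g \<noteq> 0}"
    then obtain t where "alpha_inv M g t \<noteq> 0" by (auto simp: fun_eq_iff)
    then have g: "g \<in> carrier G" and t: "t \<in> carrier G"
      and nz: "(case coset_coords (rep (t <# H)) g of (z, k) \<Rightarrow> M (t <# H, z) k) \<noteq> 0"
      by (auto simp: alpha_inv_def act_zero H_inv phi_H split: if_splits prod.splits)
    define r where "r = rep (t <# H)"
    have r: "r \<in> carrier G" using rep_G[OF in_lcosets[OF t]] by (simp add: r_def)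
    obtain z k where zk: "coset_coords r g = (z, k)" by fastforce
    then have "g = coords_elem (rep (fst (t <# H, z))) (snd (t <# H, z), k)"
      using coords_elem_coords[OF r g] by (simp add: r_def)
    moreover have "((t <# H, z), k) \<in> (SIGMA p:{p. M p \<noteq> 0}. {k. M p k \<noteq> 0})"
      using nz zk by (auto simp: r_def fun_eq_iff)
    ultimately show "g \<in> (\<lambda>(p, k). coords_elem (rep (fst p)) (snd p, k)) `
        (SIGMA p:{p. M p \<noteq> 0}. {k. M p k \<noteq> 0})"
      by (intro image_eqI[where x = "((t <# H, z), k)"]) simp_all
  qed
  have "finite {g. alpha_inv M g \<noteq> 0}"
    using M_fin M_entry_fin by (intro finite_subset[OF support] finite_imageI finite_SigmaI)
  moreover have "alpha_inv M g t = 0" if "g \<notin> carrier G \<or> t \<notin> carrier G" for g t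
    using that by (auto simp: alpha_inv_def)
  ultimately show ?thesis
    using equivariant finite_subset[OF coset_support finite_imageI[OF M_fin]]
    by (auto simp: cp_carrier_def ind_def fun_eq_iff)
qed

lemma alpha_ring_iso:
  "ring_iso_betw (alpha G H rep) (indG_carrier G H act) (indG_mult G)
      (mat_carrier G H (AH_carrier H)) (mat_mult (AH_mult G H act))"
proof -
  have "bij_betw (alpha G H rep) (indG_carrier G H act) (mat_carrier G H (AH_carrier H))"
    by (rule bij_betw_byWitness[where f' = alpha_inv])
      (use alpha_inv_alpha alpha_alpha_inv alpha_in_mat_carrier alpha_inv_in_indG_carrier in auto)
  then show ?thesis
    by (simp add: ring_iso_betw_def alpha_add alpha_mult)
qed

lemma ident_add: "ident G H act rep (v + w) = ident G H act rep v + ident G H act rep w"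
  by (simp add: fun_eq_iff ident_def act_add H_inv phi_H)

lemma ident_at:
  "x \<in> lcosets H \<Longrightarrow> k \<in> H \<Longrightarrow> ident G H act rep v (rep x \<otimes> k) = act (inv k) (v x k)"
  unfolding ident_def using rep_G H_carrier coset_rep_mult phi_rep by simp

definition vec_of :: "('g \<Rightarrow> 'r) \<Rightarrow> 'g set \<Rightarrow> 'g \<Rightarrow> 'r" where
  "vec_of \<psi> = (\<lambda>x k. if x \<in> lcosets H \<and> k \<in> H then act k (\<psi> (rep x \<otimes> k)) else 0)"

lemma vec_of_ident:
  assumes v: "v \<in> vec_carrier G H"
  shows "vec_of (ident G H act rep v) = v"
proof (intro ext)
  fix x k
  have "x \<notin> lcosets H \<or> k \<notin> H \<Longrightarrow> v x k = 0"
    using v by (auto simp: vec_carrier_def cp_carrier_def)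
  then show "vec_of (ident G H act rep v) x k = v x k"
    using ident_at[of x k v] by (auto simp: vec_of_def act_comp[symmetric] H_inv H_carrier act_one)
qed

lemma ident_vec_of:
  assumes \<psi>: "\<psi> \<in> AG_carrier G"
  shows "ident G H act rep (vec_of \<psi>) = \<psi>"
proof (intro ext)
  fix g
  show "ident G H act rep (vec_of \<psi>) g = \<psi> g"
    using \<psi> in_lcosets phi_H rep_phi act_inv_cancel
    by (cases "g \<in> carrier G") (auto simp: ident_def vec_of_def AG_carrier_def)
qed

lemma ident_in_AG_carrier:
  assumes v: "v \<in> vec_carrier G H"
  shows "ident G H act rep v \<in> AG_carrier G"
proof -
  have "{g. ident G H act rep v g \<noteq> 0} \<subseteq>
      (\<lambda>(x, k). rep x \<otimes> k) ` (SIGMA x:{x. v x \<noteq> 0}. {k. v x k \<noteq> 0})"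
  proof
    fix g assume "g \<in> {g. ident G H act rep v g \<noteq> 0}"
    then have g: "g \<in> carrier G" and nz: "v (g <# H) (phi G H rep g) \<noteq> 0"
      by (auto simp: ident_def act_zero H_inv phi_H split: if_splits)
    then show "g \<in> (\<lambda>(x, k). rep x \<otimes> k) ` (SIGMA x:{x. v x \<noteq> 0}. {k. v x k \<noteq> 0})"
      using rep_phi[OF g] by (intro image_eqI[where x = "(g <# H, phi G H rep g)"]) auto
  qed
  moreover have "finite (SIGMA x:{x. v x \<noteq> 0}. {k. v x k \<noteq> 0})"
    using v by (intro finite_SigmaI) (auto simp: vec_carrier_def cp_carrier_def)
  ultimately have "finite {g. ident G H act rep v g \<noteq> 0}"
    by (meson finite_imageI finite_subset)
  then show ?thesis by (auto simp: AG_carrier_def ident_def)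
qed

lemma vec_of_in_vec_carrier:
  assumes \<psi>: "\<psi> \<in> AG_carrier G"
  shows "vec_of \<psi> \<in> vec_carrier G H"
proof -
  have \<psi>_fin: "finite {g. \<psi> g \<noteq> 0}" using \<psi> by (simp add: AG_carrier_def)
  have "vec_of \<psi> x k \<noteq> 0 \<longleftrightarrow> x \<in> lcosets H \<and> k \<in> H \<and> \<psi> (rep x \<otimes> k) \<noteq> 0" for x k
    by (auto simp: vec_of_def act_eq_0_iff)
  then have support: "(SIGMA x:{x. vec_of \<psi> x \<noteq> 0}. {k. vec_of \<psi> x k \<noteq> 0})
      \<subseteq> (\<lambda>g. (g <# H, phi G H rep g)) ` {g. \<psi> g \<noteq> 0}"
    using coset_rep_mult phi_rep rep_G H_carrier
    by (force intro!: image_eqI[where x = "rep _ \<otimes> _"])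
  have fin: "finite (SIGMA x:{x. vec_of \<psi> x \<noteq> 0}. {k. vec_of \<psi> x k \<noteq> 0})"
    by (rule finite_subset[OF support finite_imageI[OF \<psi>_fin]])
  have "{x. vec_of \<psi> x \<noteq> 0} \<subseteq> fst ` (SIGMA x:{x. vec_of \<psi> x \<noteq> 0}. {k. vec_of \<psi> x k \<noteq> 0})"
    by (force simp: fun_eq_iff)
  then have rows: "finite {x. vec_of \<psi> x \<noteq> 0}"
    using fin finite_subset by blast
  have "{k. vec_of \<psi> x k \<noteq> 0} \<subseteq> snd ` (SIGMA x:{x. vec_of \<psi> x \<noteq> 0}. {k. vec_of \<psi> x k \<noteq> 0})" for x
    by force
  then have entries: "finite {k. vec_of \<psi> x k \<noteq> 0}" for x
    using fin finite_subset by blast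
  have "vec_of \<psi> x = 0" if "x \<notin> lcosets H" for x
    using that by (simp add: vec_of_def fun_eq_iff)
  moreover have "vec_of \<psi> x k = 0" if "k \<notin> H" for x k
    using that by (simp add: vec_of_def)
  ultimately show ?thesis
    using rows entries by (auto simp: vec_carrier_def cp_carrier_def)
qed

lemma ident_bij: "bij_betw (ident G H act rep) (vec_carrier G H) (AG_carrier G)"
  by (rule bij_betw_byWitness[where f' = vec_of])
    (use vec_of_ident ident_vec_of ident_in_AG_carrier vec_of_in_vec_carrier in auto)

text \<open>Pointwise at g = rep(gH) p, both sides are
  sums over factorisations p = h h' with h, h' \<in> H; the two index sets are matched
  by h \<mapsto> h\<inverse> p.\<close>
lemma ident_right_act:
  assumes v: "v \<in> vec_carrier G H" and b: "b \<in> AH_carrier H"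
  shows "ident G H act rep (vec_right_act (AH_mult G H act) v b) =
          AG_right_act G H act (ident G H act rep v) b"
proof (intro ext)
  fix g
  show "ident G H act rep (vec_right_act (AH_mult G H act) v b) g =
        AG_right_act G H act (ident G H act rep v) b g"
  proof (cases "g \<in> carrier G")
    case False
    then show ?thesis by (simp add: ident_def AG_right_act_def)
  next
    case g: True
    define p where "p = phi G H rep g"
    define vx where "vx = v (g <# H)"
    have p: "p \<in> H" using phi_H[OF g] by (simp add: p_def)
    have pG: "p \<in> carrier G" using H_carrier[OF p] .
    have cancel: "p \<otimes> (inv p \<otimes> h) = h" if "h \<in> H" for h
      using pG that H_carrier by (simp add: m_assoc[symmetric])
    define S where "S = {h \<in> H. vx h \<noteq> 0}"
    define T where "T = {h \<in> H. b h \<noteq> 0}"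
    have "ident G H act rep (vec_right_act (AH_mult G H act) v b) g =
        (\<Sum>h\<in>S. act (inv p) (vx h) * act (inv p \<otimes> h) (b (inv h \<otimes> p)))"
      using g p
      by (simp add: ident_def vec_right_act_def cp_mult_def p_def vx_def S_def act_sum H_inv
          act_mult act_comp)
    also have "\<dots> = (\<Sum>h'\<in>T. act (inv p) (vx (p \<otimes> inv h')) * act (inv h') (b h'))"
    proof (rule sum.reindex_bij_witness_not_neutral
        [where S' = "{h\<in>S. b (inv h \<otimes> p) = 0}" and T' = "{h'\<in>T. vx (p \<otimes> inv h') = 0}"
          and j = "\<lambda>h. inv h \<otimes> p" and i = "\<lambda>h'. p \<otimes> inv h'"])
      show "finite {h\<in>S. b (inv h \<otimes> p) = 0}" "finite {h'\<in>T. vx (p \<otimes> inv h') = 0}"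
        using v b by (auto simp: S_def T_def vx_def vec_carrier_def cp_carrier_def
            intro: finite_subset[rotated])
    qed (use pG H_carrier H_inv H_mult p act_zero cancel in
         \<open>auto simp: S_def T_def m_assoc inv_mult_group act_mult act_comp[symmetric]\<close>)
    also have "\<dots> = AG_right_act G H act (ident G H act rep v) b g"
    proof -
      have "act (inv h) (ident G H act rep v (g \<otimes> inv h) * b h)
          = act (inv p) (vx (p \<otimes> inv h)) * act (inv h) (b h)" if h: "h \<in> H" for h
      proof -
        have "ident G H act rep v (g \<otimes> inv h) = act (h \<otimes> inv p) (vx (p \<otimes> inv h))"
          using g h coset_mult_H[OF g H_inv] phi_mult[OF g H_inv] H_carrier pG
          by (simp add: ident_def vx_def p_def inv_mult_group)
        moreover have "inv h \<otimes> (h \<otimes> inv p) = inv p"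
          using h H_carrier pG by (simp add: m_assoc[symmetric])
        ultimately show ?thesis
          using h p H_inv H_mult by (simp add: act_mult act_comp[symmetric])
      qed
      then show ?thesis
        using g by (auto simp: AG_right_act_def T_def intro!: sum.cong)
    qed
    finally show ?thesis .
  qed
qed

text \<open>Compatibility of alpha with the two representations on A^{(G)} \<cong> (A \<rtimes> H)^{(G/H)}:
  again a row-wise application of alpha_row_sum.\<close>
lemma alpha_compatible:
  assumes X: "X \<in> indG_carrier G H act" and v: "v \<in> vec_carrier G H"
  shows "indG_AG_act G X (ident G H act rep v) =
          ident G H act rep (mat_vec (AH_mult G H act) (alpha G H rep X) v)"
proof (intro ext)
  fix z
  show "indG_AG_act G X (ident G H act rep v) z =
        ident G H act rep (mat_vec (AH_mult G H act) (alpha G H rep X) v) z"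
  proof (cases "z \<in> carrier G")
    case False
    then show ?thesis by (simp add: ident_def indG_AG_act_def)
  next
    case z: True
    define x where "x = z <# H"
    define r where "r = rep x"
    define p where "p = phi G H rep z"
    have x: "x \<in> lcosets H" using in_lcosets[OF z] by (simp add: x_def)
    have r: "r \<in> carrier G" using rep_G[OF x] by (simp add: r_def)
    have p: "p \<in> H" using phi_H[OF z] by (simp add: p_def)
    have z_factor: "z = r \<otimes> p" using rep_phi[OF z] by (simp add: r_def x_def p_def)
    have "ident G H act rep (mat_vec (AH_mult G H act) (alpha G H rep X) v) z =
       act (inv p) (\<Sum>y\<in>{y. alpha G H rep X (x, y) \<noteq> 0}. \<Sum>h\<in>{h\<in>H. alpha G H rep X (x, y) h \<noteq> 0}.
            (\<lambda>y h a. a * act h (v y (inv h \<otimes> p))) y h (alpha G H rep X (x, y) h))"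
      using z p by (simp add: ident_def mat_vec_def sum_fun_apply cp_mult_def x_def p_def)
    also have "\<dots> = act (inv p) (\<Sum>g\<in>{g\<in>carrier G. X g \<noteq> 0}.
        X g r * act (inv (phi G H rep (inv g \<otimes> r))) (v ((inv g \<otimes> r) <# H) (phi G H rep (inv g \<otimes> r) \<otimes> p)))"
      using indG_carrierD(2)[OF X] phi_G r by (subst alpha_row_sum[OF _ x]) (simp_all add: r_def)
    also have "\<dots> = (\<Sum>g\<in>{g\<in>carrier G. X g \<noteq> 0}. X g z * ident G H act rep v (inv g \<otimes> z))"
      unfolding act_sum[OF H_inv[OF p]]
    proof (rule sum.cong[OF refl])
      fix g assume "g \<in> {g\<in>carrier G. X g \<noteq> 0}"
      then have g: "g \<in> carrier G" by simp
      define t where "t = inv g \<otimes> r"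
      have t: "t \<in> carrier G" using g r by (simp add: t_def)
      have gz: "inv g \<otimes> z = t \<otimes> p" using z_factor g r H_carrier[OF p] by (simp add: t_def m_assoc)
      have "X g z = act (inv p) (X g r)" using indG_carrierD(4)[OF X r p] z_factor by simp
      moreover have "ident G H act rep v (inv g \<otimes> z) =
          act (inv p \<otimes> inv (phi G H rep t)) (v (t <# H) (phi G H rep t \<otimes> p))"
        unfolding gz ident_def using t H_carrier[OF p] coset_mult_H[OF t p] phi_mult[OF t p] phi_G[OF t]
        by (simp add: inv_mult_group)
      ultimately show "act (inv p) (X g r * act (inv (phi G H rep (inv g \<otimes> r)))
             (v ((inv g \<otimes> r) <# H) (phi G H rep (inv g \<otimes> r) \<otimes> p))) =
            X g z * ident G H act rep v (inv g \<otimes> z)"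
        using phi_H[OF t] p H_inv by (simp add: t_def[symmetric] act_mult act_comp)
    qed
    also have "\<dots> = indG_AG_act G X (ident G H act rep v) z"
      using z by (simp add: indG_AG_act_def)
    finally show ?thesis by simp
  qed
qed

end

text \<open>Equivariant ring homomorphisms preserve 0, which is all naturality needs.\<close>
lemma H_ring_hom_zero:
  assumes "H_ring_hom H act act' f"
  shows "f 0 = 0"
proof -
  have "f 0 = f 0 + f 0" using assms by (metis H_ring_hom_def add_0)
  then show ?thesis by simp
qed

theorem theorem10p12:
  fixes G :: "('g, 'm) monoid_scheme" and H :: "'g set"
    and act :: "'g \<Rightarrow> 'a::ring \<Rightarrow> 'a" and rep :: "'g set \<Rightarrow> 'g"
  assumes "group G" and "subgroup H G" and "H_ring G H act"
    and "rep_system G H rep"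
  shows
    \<comment> \<open>alpha is a ring isomorphism ind_H^G(A) \<rtimes> G \<cong> M_{G/H}(A \<rtimes> H)\<close>
    "ring_iso_betw (alpha G H rep)
        (indG_carrier G H act) (indG_mult G)
        (mat_carrier G H (AH_carrier H)) (mat_mult (AH_mult G H act))
   \<comment> \<open>explicit formula on generators xi_H(s,a) \<rtimes> g\<close>
   \<and> (\<forall>s\<in>carrier G. \<forall>a. \<forall>g\<in>carrier G.
        alpha G H rep (cp_single (xi G H act s a) g) =
          mat_unit (s <#\<^bsub>G\<^esub> H) ((inv\<^bsub>G\<^esub> g \<otimes>\<^bsub>G\<^esub> s) <#\<^bsub>G\<^esub> H)
            (cp_single (act (phi G H rep s) a)
               (phi G H rep s \<otimes>\<^bsub>G\<^esub> inv\<^bsub>G\<^esub> (phi G H rep (inv\<^bsub>G\<^esub> g \<otimes>\<^bsub>G\<^esub> s)))))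
   \<comment> \<open>alpha \<circ> (xi_H(1,-) \<rtimes> id) = (x \<mapsto> e_{H,H} \<otimes> x)\<close>
   \<and> (\<forall>x\<in>AH_carrier H.
        alpha G H rep (\<lambda>g. xi G H act \<one>\<^bsub>G\<^esub> (x g)) = mat_unit H H x)
   \<comment> \<open>naturality in A\<close>
   \<and> (\<forall>(act' :: 'g \<Rightarrow> 'b::ring \<Rightarrow> 'b) f. H_ring G H act' \<longrightarrow> H_ring_hom H act act' f \<longrightarrow>
        (\<forall>X\<in>indG_carrier G H act.
           alpha G H rep (\<lambda>g. f \<circ> X g) = (\<lambda>p. f \<circ> alpha G H rep X p)))
   \<comment> \<open>the identification (A\<rtimes>H)^{(G/H)} \<cong> A^{(G)} of right A\<rtimes>H-modules\<close>
   \<and> bij_betw (ident G H act rep) (vec_carrier G H) (AG_carrier G)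
   \<and> (\<forall>v\<in>vec_carrier G H. \<forall>w\<in>vec_carrier G H.
        ident G H act rep (v + w) = ident G H act rep v + ident G H act rep w)
   \<and> (\<forall>v\<in>vec_carrier G H. \<forall>b\<in>AH_carrier H.
        ident G H act rep (vec_right_act (AH_mult G H act) v b) =
          AG_right_act G H act (ident G H act rep v) b)
   \<comment> \<open>compatibility of alpha with the representations on A^{(G)}\<close>
   \<and> (\<forall>X\<in>indG_carrier G H act. \<forall>v\<in>vec_carrier G H.
        indG_AG_act G X (ident G H act rep v) =
          ident G H act rep (mat_vec (AH_mult G H act) (alpha G H rep X) v))"
proof -
  interpret H_ring_reps G H rep act
    using assms by (simp add: H_ring_reps_def H_ring_reps_axioms_def subgroup_reps_def
        subgroup_reps_axioms_def group_subgroup_def group_subgroup_axioms_def)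
  have natural: "alpha G H rep (\<lambda>g. f \<circ> X g) = (\<lambda>p. f \<circ> alpha G H rep X p)"
    if "H_ring_hom H act act' f" for act' :: "'g \<Rightarrow> 'b::ring \<Rightarrow> 'b" and f X
    using alpha_natural H_ring_hom_zero[OF that] by blast
  show ?thesis
    using alpha_ring_iso alpha_generator[where act = act] alpha_corner[of act, OF act_one] natural
      ident_bij ident_add ident_right_act alpha_compatible
    by simp
qed

end
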